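(* Let $n\ge 1$ and let $f(x)=x^n+\sum_{i=1}^{n}c_i x^{n-i}$ be an irreducible polynomial over $\mathrm{GF}(2)$ with $f(x)\neq x$. Let $B$ be the binary matrix with $2^n-1$ rows and columns indexed by $j=0,1,2,\ldots$, defined as follows: the rows are indexed by the nonzero initial states $s=(a_{-n},a_{-n+1},\ldots,a_{-1})\in \mathrm{GF}(2)^n\setminus\{0\}$, and the row indexed by $s$ is the sequence $a_0,a_1,a_2,\ldots$ determined by the recurrence $a_k=\sum_{i=1}^{n}c_i a_{k-i}$ (mod $2$) from the initial state $s$. Let $j_1,\ldots,j_n$ be $n$ distinct nonnegative integers, and let $T$ be the $(2^n-1)\times n$ submatrix of $B$ consisting of the columns indexed by $j_1,\ldots,j_n$. Then every nonzero binary $n$-tuple appears as a row of $T$ if and only if the $n$ columns of $T$ are linearly independent over $\mathrm{GF}(2)$.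
   Context: Equivalently, the rows of $B$ are all cyclic shifts of all nonzero sequences satisfying the linear recurrence associated with $f(x)$; since $f$ is irreducible with nonzero constant term, all these nonzero sequences are periodic with the same least period. *)

theory Defs
  imports "HOL-Library.Z2" "HOL-Computational_Algebra.Polynomial"
begin

text \<open>Linear recurrence over GF(2) (type bit) associated with a monic polynomial
  f(x) = x^n + sum_{i=1..n} c_i x^(n-i), where n = degree f and c_i = coeff f (n - i).
  A state is the list (a_(k-n), ..., a_(k-1)); one step appends
  a_k = sum_{i=1..n} c_i a_(k-i) and drops the first entry.\<close>

fun lfsr_state :: "bit poly \<Rightarrow> bit list \<Rightarrow> nat \<Rightarrow> bit list" where
  "lfsr_state f s 0 = s"
| "lfsr_state f s (Suc k) =
     (let t = lfsr_state f s k; n = degree f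
      in tl t @ [\<Sum>i = 1..n. coeff f (n - i) * t ! (n - i)])"

text \<open>Entry of B in the row indexed by the initial state s = (a_(-n),...,a_(-1))
  and column j: the term a_j of the recurrence sequence.\<close>
definition lfsr_entry :: "bit poly \<Rightarrow> bit list \<Rightarrow> nat \<Rightarrow> bit" where
  "lfsr_entry f s j = lfsr_state f s (Suc j) ! (degree f - 1)"

definition nonzero_states :: "nat \<Rightarrow> bit list set" where
  "nonzero_states n = {s. length s = n \<and> s \<noteq> replicate n 0}"

definition T_row :: "bit poly \<Rightarrow> nat list \<Rightarrow> bit list \<Rightarrow> bit list" where
  "T_row f js s = map (lfsr_entry f s) js"

definition T_columns_lin_indep :: "bit poly \<Rightarrow> nat list \<Rightarrow> bool" where
  "T_columns_lin_indep f js \<longleftrightarrow>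
     (\<forall>l :: nat \<Rightarrow> bit.
        (\<forall>s \<in> nonzero_states (degree f). (\<Sum>m < length js. l m * lfsr_entry f s (js ! m)) = 0)
        \<longrightarrow> (\<forall>m < length js. l m = 0))"

end

theory Submission imports Defs "Jordan_Normal_Form.Determinant" begin

text \<open>Each term of the recurrence depends linearly on the initial state, so there is an
  n \<times> n matrix A = T_mat f js over GF(2) with T_row f js s = A s. The rows of T are then
  the images of the nonzero vectors under A, and a vanishing combination of the columns of T
  with coefficients w is a vector w with A^T w = 0. So both conditions say that A is
  invertible.\<close>

lemma length_lfsr_state:
  assumes "length s = degree f" "degree f \<ge> 1"
  shows "length (lfsr_state f s k) = degree f"
  using assms by (induction k) (auto simp: Let_def)

lemma lfsr_state_superposition:
  assumes "length s = degree f" "degree f \<ge> 1" "p < degree f"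
  shows "lfsr_state f s k ! p =
    (\<Sum>i<degree f. s ! i * lfsr_state f (list_of_vec (unit_vec (degree f) i)) k ! p)"
  using assms(3)
proof (induction k arbitrary: p)
  case 0
  then show ?case
    by (simp add: list_of_vec_index mult.commute[of "s ! _"] if_distrib sum.delta cong: if_cong)
next
  case (Suc k)
  let ?n = "degree f" and ?e = "\<lambda>i. list_of_vec (unit_vec (degree f) i)"
  have len_e: "length (lfsr_state f (?e i) k) = ?n" for i
    using assms by (intro length_lfsr_state) auto
  have len_s: "length (lfsr_state f s k) = ?n"
    using assms by (intro length_lfsr_state) auto
  show ?case
  proof (cases "p < ?n - 1")
    case True
    then show ?thesis using len_e len_s Suc.IH[of "Suc p"]
      by (simp add: Let_def nth_append nth_tl)
  next
    case False
    then have p: "p = ?n - 1" using Suc.prems by simp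
    have "lfsr_state f s (Suc k) ! p =
        (\<Sum>j = 1..?n. coeff f (?n - j) * lfsr_state f s k ! (?n - j))"
      using p len_s assms by (simp add: Let_def nth_append)
    also have "\<dots> = (\<Sum>j = 1..?n. coeff f (?n - j) *
        (\<Sum>i<?n. s ! i * lfsr_state f (?e i) k ! (?n - j)))"
      by (rule sum.cong) (use Suc.IH in auto)
    also have "\<dots> = (\<Sum>i<?n. s ! i *
        (\<Sum>j = 1..?n. coeff f (?n - j) * lfsr_state f (?e i) k ! (?n - j)))"
      unfolding sum_distrib_left
      by (subst sum.swap) (intro sum.cong refl, simp only: mult.left_commute)
    also have "\<dots> = (\<Sum>i<?n. s ! i * lfsr_state f (?e i) (Suc k) ! p)"
      by (rule sum.cong) (use p len_e assms in \<open>auto simp: Let_def nth_append\<close>)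
    finally show ?thesis .
  qed
qed

definition T_mat :: "bit poly \<Rightarrow> nat list \<Rightarrow> bit mat" where
  "T_mat f js = mat (length js) (degree f)
     (\<lambda>(m, i). lfsr_entry f (list_of_vec (unit_vec (degree f) i)) (js ! m))"

lemma T_row_eq_mult_mat_vec:
  assumes "length s = degree f" "degree f \<ge> 1"
  shows "vec_of_list (T_row f js s) = T_mat f js *\<^sub>v vec_of_list s"
proof (rule eq_vecI)
  fix m assume "m < dim_vec (T_mat f js *\<^sub>v vec_of_list s)"
  then have m: "m < length js" by (simp add: T_mat_def)
  have "vec_of_list (T_row f js s) $ m = lfsr_entry f s (js ! m)"
    using m by (simp add: T_row_def vec_of_list_index)
  also have "\<dots> = (\<Sum>i<degree f.
      s ! i * lfsr_entry f (list_of_vec (unit_vec (degree f) i)) (js ! m))"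
    using lfsr_state_superposition[OF assms, of "degree f - 1" "Suc (js ! m)"] assms
    by (simp add: lfsr_entry_def)
  also have "\<dots> = (\<Sum>i<degree f.
      lfsr_entry f (list_of_vec (unit_vec (degree f) i)) (js ! m) * s ! i)"
    by (simp only: mult.commute)
  also have "\<dots> = (T_mat f js *\<^sub>v vec_of_list s) $ m"
    using m assms
    by (simp add: T_mat_def scalar_prod_def vec_of_list_index lessThan_atLeast0)
  finally show "vec_of_list (T_row f js s) $ m = (T_mat f js *\<^sub>v vec_of_list s) $ m" .
qed (simp add: T_row_def T_mat_def)

lemma mult_mat_vec_surj_if_transpose_inj:
  fixes A :: "'a :: field mat"
  assumes A: "A \<in> carrier_mat n n"
    and inj: "\<And>w. w \<in> carrier_vec n \<Longrightarrow> transpose_mat A *\<^sub>v w = 0\<^sub>v n \<Longrightarrow> w = 0\<^sub>v n"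
    and b: "b \<in> carrier_vec n"
  obtains x where "x \<in> carrier_vec n" "A *\<^sub>v x = b"
proof -
  have "transpose_mat A \<in> carrier_mat n n"
    using A by simp
  then have "det (transpose_mat A) \<noteq> 0"
    using inj det_0_iff_vec_prod_zero by blast
  then have "det A \<noteq> 0"
    unfolding det_transpose[OF A] .
  from det_non_zero_imp_unit[OF A this]
  have "A \<in> Units (ring_mat TYPE('a) n undefined)" .
  then obtain B where B: "B \<in> carrier_mat n n" and AB: "A * B = 1\<^sub>m n"
    unfolding Units_def ring_mat_simps by blast
  have "A *\<^sub>v (B *\<^sub>v b) = (A * B) *\<^sub>v b"
    by (rule assoc_mult_mat_vec[OF A B b, symmetric])
  also have "\<dots> = b"
    unfolding AB by (rule one_mult_mat_vec[OF b])
  finally have "A *\<^sub>v (B *\<^sub>v b) = b" .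
  with mult_mat_vec_carrier[OF B b] show ?thesis
    by (rule that)
qed

lemma T_columns_lin_indep_if_rows_cover:
  assumes cover: "\<forall>v. length v = length js \<and> v \<noteq> replicate (length js) 0 \<longrightarrow>
      (\<exists>s \<in> nonzero_states (degree f). T_row f js s = v)"
  shows "T_columns_lin_indep f js"
  unfolding T_columns_lin_indep_def
proof (intro allI impI)
  fix l :: "nat \<Rightarrow> bit" and m
  assume vanish: "\<forall>s \<in> nonzero_states (degree f).
      (\<Sum>k<length js. l k * lfsr_entry f s (js ! k)) = 0"
    and m: "m < length js"
  let ?e = "list_of_vec (unit_vec (length js) m)"
  have "?e ! m = 1"
    using m by (simp add: list_of_vec_index)
  then have "?e \<noteq> replicate (length js) 0"
    using m by (metis nth_replicate zero_neq_one)
  moreover have "length ?e = length js"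
    by simp
  ultimately obtain s where s: "s \<in> nonzero_states (degree f)" "T_row f js s = ?e"
    using cover by blast
  have "0 = (\<Sum>k<length js. l k * lfsr_entry f s (js ! k))"
    using vanish s(1) by (simp only:)
  also have "\<dots> = (\<Sum>k<length js. l k * ?e ! k)"
    using s(2) by (intro sum.cong refl) (metis T_row_def lessThan_iff nth_map)
  also have "\<dots> = l m"
    using m by (simp add: list_of_vec_index if_distrib sum.delta cong: if_cong)
  finally show "l m = 0" by simp
qed

lemma T_column_combination_eq_scalar_prod:
  assumes "length s = degree f" "degree f \<ge> 1" "length js = degree f"
    and "w \<in> carrier_vec (degree f)"
  shows "(\<Sum>m<length js. w $ m * lfsr_entry f s (js ! m)) =
    (transpose_mat (T_mat f js) *\<^sub>v w) \<bullet> vec_of_list s"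
proof -
  have A: "T_mat f js \<in> carrier_mat (degree f) (degree f)"
    using assms(3) by (simp add: T_mat_def)
  have "(\<Sum>m<length js. w $ m * lfsr_entry f s (js ! m)) = w \<bullet> vec_of_list (T_row f js s)"
    unfolding scalar_prod_def
    by (intro sum.cong) (auto simp: T_row_def vec_of_list_index lessThan_atLeast0)
  also have "\<dots> = w \<bullet> (T_mat f js *\<^sub>v vec_of_list s)"
    by (simp only: T_row_eq_mult_mat_vec[OF assms(1,2)])
  also have "\<dots> = (transpose_mat (T_mat f js) *\<^sub>v w) \<bullet> vec_of_list s"
    using assms(1) by (intro transpose_vec_mult_scalar[OF A _ assms(4), symmetric] carrier_vecI) simp
  finally show ?thesis .
qed

lemma transpose_T_mat_inj_if_T_columns_lin_indep:
  assumes deg: "degree f \<ge> 1" and len: "length js = degree f"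
    and indep: "T_columns_lin_indep f js"
    and w: "w \<in> carrier_vec (degree f)"
    and Aw: "transpose_mat (T_mat f js) *\<^sub>v w = 0\<^sub>v (degree f)"
  shows "w = 0\<^sub>v (degree f)"
proof -
  have "(\<Sum>m<length js. w $ m * lfsr_entry f s (js ! m)) = 0"
    if "s \<in> nonzero_states (degree f)" for s
  proof -
    have len_s: "length s = degree f"
      using that by (simp add: nonzero_states_def)
    have "(\<Sum>m<length js. w $ m * lfsr_entry f s (js ! m)) =
        (transpose_mat (T_mat f js) *\<^sub>v w) \<bullet> vec_of_list s"
      by (rule T_column_combination_eq_scalar_prod[OF len_s deg len w])
    also have "\<dots> = 0"
      unfolding Aw using len_s by (intro scalar_prod_left_zero carrier_vecI) simp
    finally show ?thesis .
  qed
  then have "\<forall>m < length js. w $ m = 0"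
    using indep[unfolded T_columns_lin_indep_def, rule_format, of "\<lambda>m. w $ m"] by blast
  then show ?thesis
    using w len by (intro eq_vecI) auto
qed

lemma rows_cover_if_T_columns_lin_indep:
  assumes deg: "degree f \<ge> 1" and len: "length js = degree f"
    and indep: "T_columns_lin_indep f js"
  shows "\<forall>v. length v = degree f \<and> v \<noteq> replicate (degree f) 0 \<longrightarrow>
      (\<exists>s \<in> nonzero_states (degree f). T_row f js s = v)"
proof (intro allI impI)
  let ?n = "degree f" and ?A = "T_mat f js"
  have A: "?A \<in> carrier_mat ?n ?n"
    using len by (simp add: T_mat_def)
  fix v :: "bit list"
  assume v: "length v = ?n \<and> v \<noteq> replicate ?n 0"
  then have "vec_of_list v \<in> carrier_vec ?n"
    by (intro carrier_vecI) simp
  then obtain x where x: "x \<in> carrier_vec ?n" "?A *\<^sub>v x = vec_of_list v"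
    using mult_mat_vec_surj_if_transpose_inj[OF A
        transpose_T_mat_inj_if_T_columns_lin_indep[OF deg len indep]]
    by blast
  let ?s = "list_of_vec x"
  have len_s: "length ?s = ?n"
    using x(1) by simp
  have row: "T_row f js ?s = v"
    using T_row_eq_mult_mat_vec[OF len_s deg] x(2) by (metis list_vec vec_list)
  have "?s \<noteq> replicate ?n 0"
  proof
    assume "?s = replicate ?n 0"
    then have "x = 0\<^sub>v ?n"
      by (metis list_of_vec_0 vec_list)
    moreover have "?A *\<^sub>v 0\<^sub>v ?n = 0\<^sub>v ?n"
      using A by (intro eq_vecI) auto
    ultimately have "vec_of_list v = 0\<^sub>v ?n"
      using x(2) by simp
    then show False
      using v by (metis list_of_vec_0 list_vec)
  qed
  with len_s row show "\<exists>s \<in> nonzero_states ?n. T_row f js s = v"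
    unfolding nonzero_states_def by blast
qed

theorem lemma4:
  fixes f :: "bit poly" and n :: nat and js :: "nat list"
  assumes "n \<ge> 1"
    and "degree f = n"
    and "lead_coeff f = 1"
    and "irreducible f"
    and "f \<noteq> [:0, 1:]"
    and "length js = n"
    and "distinct js"
  shows "(\<forall>v. length v = n \<and> v \<noteq> replicate n 0 \<longrightarrow>
            (\<exists>s \<in> nonzero_states n. T_row f js s = v))
         \<longleftrightarrow> T_columns_lin_indep f js"
proof
  assume cover: "\<forall>v. length v = n \<and> v \<noteq> replicate n 0 \<longrightarrow>
      (\<exists>s \<in> nonzero_states n. T_row f js s = v)"
  show "T_columns_lin_indep f js"
    by (rule T_columns_lin_indep_if_rows_cover) (use cover assms(2,6) in simp)
next
  assume "T_columns_lin_indep f js"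
  then show "\<forall>v. length v = n \<and> v \<noteq> replicate n 0 \<longrightarrow>
      (\<exists>s \<in> nonzero_states n. T_row f js s = v)"
    using rows_cover_if_T_columns_lin_indep[of f js] assms(1,2,6) by simp
qed

end
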